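(* Let $F$ be a field of characteristic zero and let $D$ be a derivation of the Lie algebra $W^*(1,0)$ with $D(\partial)=0$. Then $D=f\,\mathrm{ad}_{\partial}+S$ for some $f\in F$ and some scalar derivation $S$ of $W^*(1,0)$.
   Context: $W^*(1,0)$ is the Lie algebra over $F$ with basis $\{e^{ax}x^i\partial: a\in\mathbb Z, i\in\mathbb N\}$ ($\mathbb N$ the nonnegative integers), viewed as vector fields $f\partial$ with $f$ in the $F$-algebra $F[e^{\pm x},x]$ (basis $e^{ax}x^i$, multiplication adding exponents, $\partial(e^{ax}x^i)=ae^{ax}x^i+ie^{ax}x^{i-1}$), with bracket $[f\partial,g\partial]=(f\partial(g)-g\partial(f))\partial$; $\partial$ denotes the basis element $e^{0x}x^0\partial$ and $\mathrm{ad}_\partial=[\partial,\cdot]$. A derivation $D$ is a scalar derivation if for every basis element $l$ one has $D(l)=f_l\,l$ for some scalar $f_l\in F$. *)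

theory Defs
  imports "HOL-Library.Poly_Mapping" "HOL-Library.Product_Plus"
begin

text \<open>The algebra F[e^{+-x}, x]: finitely supported coefficient functions on
  the basis e^{ax} x^i, indexed by (a,i) :: int * nat.  Multiplication is the
  convolution product of Poly_Mapping, with keys added componentwise
  (e^{ax}x^i * e^{bx}x^j = e^{(a+b)x}x^{i+j}).  A vector field f\<partial> of
  W^*(1,0) is identified with its coefficient f.\<close>

type_synonym 'a Walg = "(int \<times> nat) \<Rightarrow>\<^sub>0 'a"

definition wbasis :: "int \<Rightarrow> nat \<Rightarrow> 'a::field Walg" where
  "wbasis a i = Poly_Mapping.single (a, i) 1"

definition wscale :: "'a::field \<Rightarrow> 'a Walg \<Rightarrow> 'a Walg" where
  "wscale c f = Poly_Mapping.map (\<lambda>v. c * v) f"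

definition wdiff_basis :: "int \<times> nat \<Rightarrow> 'a::field Walg" where
  "wdiff_basis p = Poly_Mapping.single p (of_int (fst p))
                 + Poly_Mapping.single (fst p, snd p - 1) (of_nat (snd p))"

definition wdiff :: "'a::field Walg \<Rightarrow> 'a Walg" where
  "wdiff f = (\<Sum>p\<in>Poly_Mapping.keys f. wscale (Poly_Mapping.lookup f p) (wdiff_basis p))"

definition wbracket :: "'a::field Walg \<Rightarrow> 'a Walg \<Rightarrow> 'a Walg" where
  "wbracket f g = f * wdiff g - g * wdiff f"

definition wpartial :: "'a::field Walg" where
  "wpartial = wbasis 0 0"

definition is_wderivation :: "('a::field Walg \<Rightarrow> 'a Walg) \<Rightarrow> bool" where
  "is_wderivation D \<longleftrightarrow>
     (\<forall>x y. D (x + y) = D x + D y) \<and>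
     (\<forall>c x. D (wscale c x) = wscale c (D x)) \<and>
     (\<forall>x y. D (wbracket x y) = wbracket (D x) y + wbracket x (D y))"

definition is_scalar_wderivation :: "('a::field Walg \<Rightarrow> 'a Walg) \<Rightarrow> bool" where
  "is_scalar_wderivation D \<longleftrightarrow> is_wderivation D \<and>
     (\<forall>a i. \<exists>c. D (wbasis a i) = wscale c (wbasis a i))"

end

theory Submission
  imports Defs
begin

text \<open>Since \<partial> is the unit of F[e^{\<plusminus>x}, x], ad(\<partial>) is differentiation, and a derivation D
  with D(\<partial>) = 0 commutes with it. In characteristic zero the eigenvectors of differentiation
  for the eigenvalue a are exactly the multiples of e^{ax}; hence D scales every e^{ax}\<partial>,
  and D(x\<partial>), being killed by differentiation, is some f\<partial>. The derivation S = D - f ad(\<partial>)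
  then kills both \<partial> and x\<partial>, and commuting S with ad(x\<partial>), which raises the power of x,
  carries the eigenvalue of e^{ax}\<partial> over to every e^{ax}x^i\<partial>.\<close>

lemma lookup_wscale [simp]: "Poly_Mapping.lookup (wscale c f) k = c * Poly_Mapping.lookup f k"
  unfolding wscale_def by (simp add: Poly_Mapping.map.rep_eq when_def)

lemma wscale_eq_single_mult: "wscale c f = Poly_Mapping.single 0 c * f"
  unfolding wscale_def using mult_map_scale_conv_mult[of c f] by (simp add: fun_eq_iff)

lemma wscale_0_left [simp]: "wscale 0 x = 0"
  and wscale_0_right [simp]: "wscale c 0 = 0"
  and wscale_1 [simp]: "wscale 1 x = x"
  and wscale_minus_1 [simp]: "wscale (- 1) x = - x"
  and wscale_wscale [simp]: "wscale c (wscale d x) = wscale (c * d) x"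
  and wscale_add: "wscale c (x + y) = wscale c x + wscale c y"
  and wscale_diff: "wscale c (x - y) = wscale c x - wscale c y"
  by (auto intro!: poly_mapping_eqI simp: lookup_add lookup_minus lookup_uminus algebra_simps)

lemma lookup_wbasis: "Poly_Mapping.lookup (wbasis a i) k = (if k = (a, i) then 1 else 0)"
  unfolding wbasis_def by (simp add: lookup_single when_def)

lemma wpartial_eq_1: "wpartial = 1"
  unfolding wpartial_def wbasis_def by (metis single_one zero_prod_def)

lemma lookup_wdiff:
  "Poly_Mapping.lookup (wdiff f) (b, j) =
     of_int b * Poly_Mapping.lookup f (b, j) + of_nat (Suc j) * Poly_Mapping.lookup f (b, Suc j)"
proof -
  let ?l = "Poly_Mapping.lookup f"
  have "Poly_Mapping.lookup (wdiff f) (b, j) =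
      (\<Sum>p\<in>Poly_Mapping.keys f. (if p = (b, j) then ?l p * of_int b else 0)
                             + (if p = (b, Suc j) then ?l p * of_nat (Suc j) else 0))"
    unfolding wdiff_def lookup_sum
    by (intro sum.cong) (auto simp: wdiff_basis_def lookup_add lookup_single when_def split: nat.split)
  also have "\<dots> = of_int b * ?l (b, j) + of_nat (Suc j) * ?l (b, Suc j)"
    by (simp add: sum.distrib sum.delta in_keys_iff mult.commute)
  finally show ?thesis .
qed

lemma wdiff_0 [simp]: "wdiff 0 = 0"
  and wdiff_add: "wdiff (x + y) = wdiff x + wdiff y"
  and wdiff_diff: "wdiff (x - y) = wdiff x - wdiff y"
  and wdiff_wscale: "wdiff (wscale c x) = wscale c (wdiff x)"
  by (auto intro!: poly_mapping_eqI simp: lookup_wdiff lookup_add lookup_minus algebra_simps)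

lemma wdiff_single:
  "wdiff (Poly_Mapping.single (a, i) c) =
     Poly_Mapping.single (a, i) (of_int a * c) + Poly_Mapping.single (a, i - 1) (of_nat i * c)"
  by (rule poly_mapping_eqI, case_tac k, cases i)
    (auto simp: lookup_wdiff lookup_add lookup_single when_def)

lemma wdiff_wbasis:
  "wdiff (wbasis a i) = wscale (of_int a) (wbasis a i) + wscale (of_nat i) (wbasis a (i - 1))"
  unfolding wbasis_def wdiff_single
  by (rule poly_mapping_eqI) (simp add: lookup_add lookup_single when_def)

lemma wdiff_wbasis_0_1: "wdiff (wbasis 0 1) = wpartial"
  unfolding wdiff_wbasis wpartial_def by simp

lemma wdiff_wpartial [simp]: "wdiff wpartial = 0"
  by (simp add: wpartial_def wdiff_wbasis)

lemma wdiff_1 [simp]: "wdiff 1 = 0"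
  using wdiff_wpartial by (simp only: wpartial_eq_1)

lemma wdiff_mult_single:
  "wdiff (Poly_Mapping.single p c * Poly_Mapping.single q d) =
    wdiff (Poly_Mapping.single p c) * Poly_Mapping.single q d
    + Poly_Mapping.single p c * wdiff (Poly_Mapping.single q d)"
proof (cases p; cases q)
  fix a i b j
  assume pq: "p = (a, i)" "q = (b, j)"
  show ?thesis
    unfolding pq mult_single wdiff_single distrib_right distrib_left
    by (rule poly_mapping_eqI, case_tac k, cases i; cases j)
      (auto simp: lookup_wdiff lookup_add lookup_single when_def algebra_simps)
qed

lemma poly_mapping_single_induct:
  assumes "P 0" and "\<And>f a b. P f \<Longrightarrow> P (f + Poly_Mapping.single a b)"
  shows "P f"
proof (induction f rule: update_induct)
  case (update f a b)
  then have "Poly_Mapping.update a b f = f + Poly_Mapping.single a b"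
    by (intro poly_mapping_eqI) (auto simp: lookup_update lookup_add lookup_single when_def in_keys_iff)
  with update show ?case by (simp add: assms(2))
qed (rule assms(1))

lemma wdiff_mult: "wdiff (x * y) = wdiff x * y + x * wdiff y"
proof (induction x rule: poly_mapping_single_induct)
  case (2 f a b)
  have "wdiff (Poly_Mapping.single a b * y) =
      wdiff (Poly_Mapping.single a b) * y + Poly_Mapping.single a b * wdiff y"
    by (induction y rule: poly_mapping_single_induct)
      (simp_all add: distrib_left distrib_right wdiff_add wdiff_mult_single)
  with 2 show ?case by (simp add: distrib_left distrib_right wdiff_add)
qed simp

lemma wbracket_wpartial: "wbracket wpartial x = wdiff x"
  unfolding wbracket_def wpartial_eq_1 by simp

lemma wbracket_0_left [simp]: "wbracket 0 x = 0"
  and wbracket_0_right [simp]: "wbracket x 0 = 0"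
  and wbracket_add_right: "wbracket z (x + y) = wbracket z x + wbracket z y"
  and wbracket_diff_left: "wbracket (x - y) z = wbracket x z - wbracket y z"
  and wbracket_diff_right: "wbracket z (x - y) = wbracket z x - wbracket z y"
  and wbracket_wscale_left: "wbracket (wscale c x) y = wscale c (wbracket x y)"
  and wbracket_wscale_right: "wbracket y (wscale c x) = wscale c (wbracket y x)"
  unfolding wbracket_def wdiff_wscale
  by (simp_all add: wdiff_add wdiff_diff wscale_eq_single_mult algebra_simps)

lemma wdiff_wbracket: "wdiff (wbracket x y) = wbracket (wdiff x) y + wbracket x (wdiff y)"
  unfolding wbracket_def by (simp add: wdiff_mult wdiff_diff algebra_simps)

lemma wbracket_x_wbasis:
  "wbracket (wbasis 0 1) (wbasis a i) =
     wscale (of_int a) (wbasis a (Suc i)) + wscale (of_nat i - 1) (wbasis a i)"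
  unfolding wbracket_def wdiff_wbasis
  unfolding wbasis_def wscale_eq_single_mult distrib_left mult_single
  by (rule poly_mapping_eqI, case_tac k, cases i)
    (auto simp: lookup_add lookup_minus lookup_single when_def algebra_simps)

lemma finite_support_vanishes_downward:
  fixes g :: "nat \<Rightarrow> 'a::zero"
  assumes "finite {j. g j \<noteq> 0}" and "\<And>j. g (Suc j) = 0 \<Longrightarrow> g j = 0"
  shows "g j = 0"
proof (rule ccontr)
  assume "g j \<noteq> 0"
  then have "g (j + n) \<noteq> 0" for n
    by (induction n) (use assms(2) in auto)
  then have "{j..} \<subseteq> {j. g j \<noteq> 0}"
    by (auto simp: atLeast_iff dest!: le_Suc_ex)
  with assms(1) show False
    using finite_subset infinite_Ici by blast
qed

lemma wdiff_eigenvector: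
  fixes y :: "'a::field_char_0 Walg"
  assumes "wdiff y = wscale (of_int a) y"
  shows "y = wscale (Poly_Mapping.lookup y (a, 0)) (wbasis a 0)"
proof -
  let ?l = "Poly_Mapping.lookup y"
  have recurrence: "(of_int b - of_int a) * ?l (b, j) + of_nat (Suc j) * ?l (b, Suc j) = 0" for b j
    using arg_cong[OF assms, of "\<lambda>z. Poly_Mapping.lookup z (b, j)"]
    by (simp add: lookup_wdiff algebra_simps)
  have off_eigenvalue: "?l (b, j) = 0" if "b \<noteq> a" for b j
  proof (rule finite_support_vanishes_downward[where g = "\<lambda>j. ?l (b, j)"])
    have "{j. ?l (b, j) \<noteq> 0} \<subseteq> snd ` Poly_Mapping.keys y"
      by (auto simp: in_keys_iff intro: rev_image_eqI[of "(b, _)"])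
    then show "finite {j. ?l (b, j) \<noteq> 0}"
      by (rule finite_subset) simp
    show "?l (b, j) = 0" if "?l (b, Suc j) = 0" for j
      using recurrence[of b j] that \<open>b \<noteq> a\<close> by simp
  qed
  have at_eigenvalue: "?l (a, Suc j) = 0" for j
    using recurrence[of a j] by (simp del: of_nat_Suc)
  show ?thesis
  proof (rule poly_mapping_eqI)
    fix k :: "int \<times> nat"
    obtain b j where k: "k = (b, j)"
      by (cases k)
    show "?l k = Poly_Mapping.lookup (wscale (?l (a, 0)) (wbasis a 0)) k"
      unfolding k using off_eigenvalue[of b j] at_eigenvalue
      by (cases j) (auto simp: lookup_wbasis)
  qed
qed

lemma is_wderivationD:
  assumes "is_wderivation D"
  shows wderivation_add: "D (x + y) = D x + D y"
    and wderivation_wscale: "D (wscale c x) = wscale c (D x)"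
    and wderivation_wbracket: "D (wbracket x y) = wbracket (D x) y + wbracket x (D y)"
  using assms unfolding is_wderivation_def by blast+

lemma is_wderivation_wdiff: "is_wderivation wdiff"
  unfolding is_wderivation_def by (simp add: wdiff_add wdiff_wscale wdiff_wbracket)

lemma is_wderivation_diff_wscale:
  assumes "is_wderivation D" "is_wderivation E"
  shows "is_wderivation (\<lambda>x. D x - wscale c (E x))"
  using assms unfolding is_wderivation_def
  by (simp add: wscale_add wscale_diff wbracket_diff_left wbracket_diff_right
      wbracket_wscale_left wbracket_wscale_right mult.commute)

lemma wderivation_commutes_wdiff:
  assumes "is_wderivation D" "D wpartial = 0"
  shows "D (wdiff x) = wdiff (D x)"
  using wderivation_wbracket[OF assms(1), of wpartial x] assms(2)
  by (simp add: wbracket_wpartial)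

lemma wderivation_wbasis_0:
  fixes D :: "'a::field_char_0 Walg \<Rightarrow> 'a Walg"
  assumes "is_wderivation D" "D wpartial = 0"
  shows "\<exists>c. D (wbasis a 0) = wscale c (wbasis a 0)"
proof -
  have "wdiff (D (wbasis a 0)) = wscale (of_int a) (D (wbasis a 0))"
    using wderivation_commutes_wdiff[OF assms, of "wbasis a 0"]
    by (simp add: wdiff_wbasis wderivation_wscale[OF assms(1)])
  then show ?thesis
    using wdiff_eigenvector by blast
qed

lemma wderivation_wbasis_Suc_nonzero:
  fixes S :: "'a::field_char_0 Walg \<Rightarrow> 'a Walg"
  assumes "is_wderivation S" "S (wbasis 0 1) = 0" "a \<noteq> 0"
    and "S (wbasis a i) = wscale s (wbasis a i)"
  shows "S (wbasis a (Suc i)) = wscale s (wbasis a (Suc i))"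
proof -
  have "S (wbracket (wbasis 0 1) (wbasis a i)) = wbracket (wbasis 0 1) (S (wbasis a i))"
    using wderivation_wbracket[OF assms(1)] assms(2) by simp
  then have eq: "wscale (of_int a) (S (wbasis a (Suc i))) =
      wscale (of_int a) (wscale s (wbasis a (Suc i)))"
    unfolding assms(4) wbracket_wscale_right wbracket_x_wbasis
    by (simp add: assms(4) wderivation_add[OF assms(1)] wderivation_wscale[OF assms(1)]
        wscale_add mult.commute)
  show ?thesis
  proof (rule poly_mapping_eqI)
    fix k
    show "Poly_Mapping.lookup (S (wbasis a (Suc i))) k =
        Poly_Mapping.lookup (wscale s (wbasis a (Suc i))) k"
      using arg_cong[OF eq, of "\<lambda>z. Poly_Mapping.lookup z k"] \<open>a \<noteq> 0\<close> by simp
  qed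
qed

text \<open>For a = 0, ad(x\<partial>) does not reach x^{i+1}\<partial> from x^i\<partial>. Instead,
  S(x^{i+1}\<partial>) - s x^{i+1}\<partial> is killed by differentiation, hence equals l\<partial>; since ad(x\<partial>)
  acts on x^{i+1}\<partial> and on \<partial> with the distinct eigenvalues i and -1, this forces l = 0.\<close>

lemma wderivation_wbasis_Suc_zero:
  fixes S :: "'a::field_char_0 Walg \<Rightarrow> 'a Walg"
  assumes S: "is_wderivation S" "S wpartial = 0" "S (wbasis 0 1) = 0"
    and "S (wbasis 0 i) = wscale s (wbasis 0 i)"
  shows "S (wbasis 0 (Suc i)) = wscale s (wbasis 0 (Suc i))"
proof -
  let ?E = "wbasis 0 (Suc i) :: 'a Walg"
  define d where "d = S ?E - wscale s ?E"
  have "wdiff d = wscale (of_nat (Suc i)) (S (wbasis 0 i) - wscale s (wbasis 0 i))"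
    unfolding d_def
    by (simp add: wdiff_diff wdiff_wscale wdiff_wbasis wscale_diff mult.commute
        wderivation_wscale[OF S(1)] flip: wderivation_commutes_wdiff[OF S(1,2)])
  then have "wdiff d = wscale (of_int 0) d"
    using assms(4) by simp
  then obtain l where "d = wscale l (wbasis 0 0)"
    using wdiff_eigenvector by blast
  then have SE: "S ?E = wscale s ?E + wscale l (wbasis 0 0)"
    unfolding d_def by (simp add: algebra_simps)
  have x_E: "wbracket (wbasis 0 1) ?E = wscale (of_nat i) ?E"
    using wbracket_x_wbasis[of 0 "Suc i"] by simp
  have x_1: "wbracket (wbasis 0 1) (wbasis 0 0) = - (wbasis 0 0 :: 'a Walg)"
    using wbracket_x_wbasis[of 0 0] by simp
  have "S (wbracket (wbasis 0 1) ?E) = wbracket (wbasis 0 1) (S ?E)"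
    using wderivation_wbracket[OF S(1)] S(3) by simp
  then have "wscale (of_nat i) (S ?E) = wscale s (wscale (of_nat i) ?E) + wscale l (- wbasis 0 0)"
    unfolding x_E wderivation_wscale[OF S(1)]
    unfolding SE wbracket_add_right wbracket_wscale_right x_E x_1 .
  then have "Poly_Mapping.lookup (wscale (of_nat i) (S ?E)) (0, 0) =
      Poly_Mapping.lookup (wscale s (wscale (of_nat i) ?E) + wscale l (- wbasis 0 0)) (0, 0)"
    by (rule arg_cong)
  then have "of_nat i * l = - l"
    by (simp add: SE lookup_add lookup_minus lookup_wbasis)
  then have "of_nat (Suc i) * l = 0"
    by (simp add: algebra_simps)
  then show ?thesis
    using SE by (simp del: of_nat_Suc)
qed

lemma scalar_wderivation_if_kills_wpartial_x_wpartial: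
  fixes S :: "'a::field_char_0 Walg \<Rightarrow> 'a Walg"
  assumes S: "is_wderivation S" "S wpartial = 0" "S (wbasis 0 1) = 0"
  shows "is_scalar_wderivation S"
  unfolding is_scalar_wderivation_def
proof (intro conjI allI S(1))
  fix a i
  obtain s where "S (wbasis a 0) = wscale s (wbasis a 0)"
    using wderivation_wbasis_0[OF S(1,2)] by blast
  then have "S (wbasis a i) = wscale s (wbasis a i)"
  proof (induction i)
    case (Suc i)
    then show ?case
      using wderivation_wbasis_Suc_zero[OF S] wderivation_wbasis_Suc_nonzero[OF S(1,3)]
      by (cases "a = 0") blast+
  qed
  then show "\<exists>c. S (wbasis a i) = wscale c (wbasis a i)" ..
qed

theorem lemma4:
  fixes D :: "'a::field_char_0 Walg \<Rightarrow> 'a Walg"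
  assumes "is_wderivation D"
    and "D wpartial = 0"
  shows "\<exists>f S. is_scalar_wderivation S \<and>
           (\<forall>x. D x = wscale f (wbracket wpartial x) + S x)"
proof -
  have "wdiff (D (wbasis 0 1)) = D wpartial"
    by (simp only: wderivation_commutes_wdiff[OF assms, symmetric] wdiff_wbasis_0_1)
  then have "wdiff (D (wbasis 0 1)) = wscale (of_int 0) (D (wbasis 0 1))"
    using assms(2) by simp
  then obtain f where f: "D (wbasis 0 1) = wscale f wpartial"
    using wdiff_eigenvector unfolding wpartial_def by blast
  define S where "S x = D x - wscale f (wdiff x)" for x
  have "is_wderivation S"
    unfolding S_def by (rule is_wderivation_diff_wscale[OF assms(1) is_wderivation_wdiff])
  moreover have "S wpartial = 0" and "S (wbasis 0 1) = 0"
    by (simp_all only: S_def assms(2) f wdiff_wbasis_0_1 wdiff_wpartial wscale_0_right diff_self)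
  ultimately have "is_scalar_wderivation S"
    by (rule scalar_wderivation_if_kills_wpartial_x_wpartial)
  moreover have "\<forall>x. D x = wscale f (wbracket wpartial x) + S x"
    by (simp add: S_def wbracket_wpartial)
  ultimately show ?thesis by blast
qed

end
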